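(* Let $\{x_t\}_{t\in[0,1]}\in\mathscr H$ with covariance $C(s,t)=\tilde C(s-t)$, and let $\{y_t\}_{t\in[0,1]}\in\mathscr H_0$ be the process it generates, with covariance function $R(s,t)$. Let $0<\alpha\le1$. Then $\tilde C\in C^{0,\alpha}([0,1])$ implies $R\in C^{0,\alpha}([0,1]\times[0,1])$, and $R\in C^{0,\alpha}([0,1]\times[0,1])$ implies that, for every $\beta<\alpha/2$, suitable modifications $\{\tilde y_t\}$ of $y$ and $\{\tilde x_t\}$ of $x$ have almost all trajectories in $C^{0,\beta}([0,1])$.
   Context: $\mathscr H$ is the set of real zero-mean Gaussian processes on $[0,1]$ with covariance $\tilde C(s-t)$ for a continuous function $\tilde C$ and $x_0=x_1$ a.s. The process generated by $x\in\mathscr H$ is the zero-mean Gaussian process $y$ whose finite-dimensional laws equal those of $x$ conditioned on $x_0=0$; its covariance is $R(s,t)=C(s,t)-C(s,0)C(0,t)/C(0,0)$; $\mathscr H_0$ is the set of such $y$. $C^{0,\alpha}$ denotes the Hölder space with exponent $\alpha$. *)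

theory Defs
  imports "HOL-Probability.Probability"
begin

text \<open>Hoelder space C^{0,a}(D): f satisfies a Hoelder condition with exponent a on D
  (on the compact domains used here this also gives boundedness).\<close>
definition holder_on :: "real \<Rightarrow> 'a::metric_space set \<Rightarrow> ('a \<Rightarrow> 'b::metric_space) \<Rightarrow> bool" where
  "holder_on a D f \<longleftrightarrow> (\<exists>K. \<forall>p\<in>D. \<forall>q\<in>D. dist (f p) (f q) \<le> K * dist p q powr a)"

definition centered_gaussian_rv :: "'a measure \<Rightarrow> ('a \<Rightarrow> real) \<Rightarrow> bool" where
  "centered_gaussian_rv M X \<longleftrightarrow> X \<in> borel_measurable M \<and>
     (\<exists>\<sigma>\<ge>0. distr M borel X =
        (if \<sigma> = 0 then return borel 0 else density lborel (normal_density 0 \<sigma>)))"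

definition zero_mean_gaussian_process :: "'a measure \<Rightarrow> real set \<Rightarrow> (real \<Rightarrow> 'a \<Rightarrow> real) \<Rightarrow> bool" where
  "zero_mean_gaussian_process M T X \<longleftrightarrow> prob_space M \<and>
     (\<forall>t\<in>T. X t \<in> borel_measurable M) \<and>
     (\<forall>I c. finite I \<longrightarrow> I \<subseteq> T \<longrightarrow> centered_gaussian_rv M (\<lambda>\<omega>. \<Sum>i\<in>I. c i * X i \<omega>))"

definition cov_fun :: "'a measure \<Rightarrow> (real \<Rightarrow> 'a \<Rightarrow> real) \<Rightarrow> real \<Rightarrow> real \<Rightarrow> real" where
  "cov_fun M X s t = (\<integral>\<omega>. X s \<omega> * X t \<omega> \<partial>M)"

definition in_H :: "'a measure \<Rightarrow> (real \<Rightarrow> 'a \<Rightarrow> real) \<Rightarrow> (real \<Rightarrow> real) \<Rightarrow> bool" where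
  "in_H M x Ct \<longleftrightarrow> zero_mean_gaussian_process M {0..1} x \<and>
     continuous_on {-1..1} Ct \<and>
     (\<forall>s\<in>{0..1}. \<forall>t\<in>{0..1}. cov_fun M x s t = Ct (s - t)) \<and>
     (AE \<omega> in M. x 0 \<omega> = x 1 \<omega>)"

definition gen_cov :: "(real \<Rightarrow> real) \<Rightarrow> real \<Rightarrow> real \<Rightarrow> real" where
  "gen_cov Ct s t = Ct (s - t) - Ct (s - 0) * Ct (0 - t) / Ct 0"

definition generated_by :: "'b measure \<Rightarrow> (real \<Rightarrow> 'b \<Rightarrow> real) \<Rightarrow> (real \<Rightarrow> real) \<Rightarrow> bool" where
  "generated_by N y Ct \<longleftrightarrow> zero_mean_gaussian_process N {0..1} y \<and>
     (\<forall>s\<in>{0..1}. \<forall>t\<in>{0..1}. cov_fun N y s t = gen_cov Ct s t)"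

definition modification :: "'a measure \<Rightarrow> (real \<Rightarrow> 'a \<Rightarrow> real) \<Rightarrow> (real \<Rightarrow> 'a \<Rightarrow> real) \<Rightarrow> bool" where
  "modification M X X' \<longleftrightarrow> (\<forall>t\<in>{0..1}. X' t \<in> borel_measurable M \<and> (AE \<omega> in M. X' t \<omega> = X t \<omega>))"

end

theory Submission
  imports Defs
begin

text \<open>
  For the first part, R(s,t) = C(s-t) - C(s) C(-t) / C(0) is built from the Hoelder function C by
  sums and products on a bounded set; evenness of C (from the symmetry of the covariance) extends
  the Hoelder bound from [0,1] to [-1,1].

  For the second part, the Hoelder bound on R at the points (s,s), (s,t), (t,t) gives
  E|y_s - y_t|^2 = R(s,s) - 2 R(s,t) + R(t,t) <= K |s-t|^alpha. For x one has
  E|x_s - x_t|^2 = 2 (C(0) - C(|s-t|)); near 0, where C > 0 by continuity,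
  C(0) - C(u) is dominated by R(u,u) - R(0,0) = (C(0) - C(u)) (C(0) + C(u)) / C(0), and away
  from 0 it is bounded. Gaussian increments have their moments of order 2m controlled by the
  variance, so P(|X_s - X_t| > delta) <= c_m |s-t|^(alpha m) / delta^(2m), and Kolmogorov's
  continuity criterion (Borel-Cantelli along the dyadic points, then chaining) yields
  beta-Hoelder modifications for every beta < alpha/2.
\<close>

lemma centered_gaussian_rv_even_moments:
  assumes "prob_space M" and "centered_gaussian_rv M Z"
  obtains \<sigma> where "\<sigma> \<ge> 0"
    and "\<And>k. integrable M (\<lambda>\<omega>. Z \<omega> ^ (2*k))"
    and "\<And>k. (\<integral>\<omega>. Z \<omega> ^ (2*k) \<partial>M) = \<sigma>^(2*k) * (fact (2*k) / (2^k * fact k))"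
proof -
  interpret prob_space M by fact
  obtain \<sigma> where Z[measurable]: "Z \<in> borel_measurable M" and "\<sigma> \<ge> 0"
    and law: "distr M borel Z = (if \<sigma> = 0 then return borel 0 else density lborel (normal_density 0 \<sigma>))"
    using assms(2) unfolding centered_gaussian_rv_def by auto
  have moment_law: "has_bochner_integral (distr M borel Z) (\<lambda>x. x^(2*k)) (\<sigma>^(2*k) * (fact (2*k) / (2^k * fact k)))"
    for k
  proof (cases "\<sigma> = 0")
    case True
    then show ?thesis
      unfolding law by (cases k) (auto simp: has_bochner_integral_iff integrable_iff_bounded
          nn_integral_return integral_return measure_return)
  next
    case False
    with \<open>\<sigma> \<ge> 0\<close> have "\<sigma> > 0" by simp
    have "has_bochner_integral lborel (\<lambda>x. normal_density 0 \<sigma> x * x ^ (2*k)) (fact (2*k) / ((2 / \<sigma>\<^sup>2)^k * fact k))"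
      using normal_moment_even[OF \<open>\<sigma> > 0\<close>, of 0 k] by simp
    moreover have "fact (2*k) / ((2 / \<sigma>\<^sup>2)^k * fact k) = \<sigma>^(2*k) * (fact (2*k) / (2^k * fact k))"
      using \<open>\<sigma> > 0\<close> by (simp add: power_divide power_mult field_simps flip: power_mult_distrib power_mult)
    ultimately have "has_bochner_integral (density lborel (normal_density 0 \<sigma>)) (\<lambda>x. x^(2*k))
        (\<sigma>^(2*k) * (fact (2*k) / (2^k * fact k)))"
      by (intro has_bochner_integral_density) auto
    then show ?thesis unfolding law using False by simp
  qed
  show thesis
  proof
    show "\<sigma> \<ge> 0" by fact
    show "integrable M (\<lambda>\<omega>. Z \<omega> ^ (2*k))" for k
      using integrable.intros[OF moment_law] by (subst (asm) integrable_distr_eq) auto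
    show "(\<integral>\<omega>. Z \<omega> ^ (2*k) \<partial>M) = \<sigma>^(2*k) * (fact (2*k) / (2^k * fact k))" for k
      using has_bochner_integral_integral_eq[OF moment_law[of k]] by (subst (asm) integral_distr) auto
  qed
qed

lemma centered_gaussian_rv_tail_le:
  assumes "prob_space M" and "centered_gaussian_rv M W" and "(\<integral>\<omega>. (W \<omega>)^2 \<partial>M) \<le> V"
    and "\<delta> > 0"
  shows "measure M {\<omega>\<in>space M. \<delta> < \<bar>W \<omega>\<bar>} \<le> (fact (2*m) / (2^m * fact m)) * V^m / \<delta>^(2*m)"
proof -
  interpret prob_space M by fact
  have [measurable]: "W \<in> borel_measurable M"
    using assms(2) unfolding centered_gaussian_rv_def by auto
  obtain \<sigma> where "\<sigma> \<ge> 0" and integrable: "\<And>k. integrable M (\<lambda>\<omega>. W \<omega> ^ (2*k))"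
    and moment: "\<And>k. (\<integral>\<omega>. W \<omega> ^ (2*k) \<partial>M) = \<sigma>^(2*k) * (fact (2*k) / (2^k * fact k))"
    using centered_gaussian_rv_even_moments[OF assms(1,2)] by metis
  have "\<sigma>^2 \<le> V" using moment[of 1] assms(3) by simp
  define c where "c = fact (2*m) / (2^m * fact m :: real)"
  have "measure M {\<omega>\<in>space M. \<delta> < \<bar>W \<omega>\<bar>} \<le> measure M {\<omega>\<in>space M. \<delta>^(2*m) \<le> W \<omega> ^ (2*m)}"
  proof (rule finite_measure_mono)
    show "{\<omega>\<in>space M. \<delta> < \<bar>W \<omega>\<bar>} \<subseteq> {\<omega>\<in>space M. \<delta>^(2*m) \<le> W \<omega> ^ (2*m)}"
    proof safe
      fix \<omega> assume "\<delta> < \<bar>W \<omega>\<bar>"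
      then have "\<delta>^(2*m) \<le> \<bar>W \<omega>\<bar>^(2*m)" using \<open>\<delta> > 0\<close> by (intro power_mono) auto
      then show "\<delta>^(2*m) \<le> W \<omega> ^ (2*m)" by (simp add: power_even_abs)
    qed
  qed measurable
  also have "\<dots> \<le> (\<integral>\<omega>. W \<omega> ^ (2*m) \<partial>M) / \<delta>^(2*m)"
    using integrable[of m] \<open>\<delta> > 0\<close>
    by (intro integral_Markov_inequality_measure) (auto simp: zero_le_even_power)
  also have "\<dots> = (\<sigma>^2)^m * c / \<delta>^(2*m)"
    unfolding moment c_def by (simp add: power_mult)
  also have "\<dots> \<le> V^m * c / \<delta>^(2*m)"
    using \<open>\<sigma>^2 \<le> V\<close> \<open>\<delta> > 0\<close> by (intro divide_right_mono mult_right_mono power_mono) (auto simp: c_def)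
  finally show ?thesis unfolding c_def by (simp add: mult.commute)
qed

lemma zero_mean_gaussian_process_lincomb:
  assumes "zero_mean_gaussian_process M T X" "finite I" "I \<subseteq> T"
  shows "centered_gaussian_rv M (\<lambda>\<omega>. \<Sum>i\<in>I. c i * X i \<omega>)"
  using assms unfolding zero_mean_gaussian_process_def by auto

lemma zero_mean_gaussian_process_value:
  assumes "zero_mean_gaussian_process M T X" and "t \<in> T"
  shows "centered_gaussian_rv M (X t)"
  using zero_mean_gaussian_process_lincomb[OF assms(1), of "{t}" "\<lambda>_. 1"] assms(2) by simp

lemma zero_mean_gaussian_process_increment:
  assumes "zero_mean_gaussian_process M T X" and "s \<in> T" and "t \<in> T"
  shows "centered_gaussian_rv M (\<lambda>\<omega>. X s \<omega> - X t \<omega>)"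
proof (cases "s = t")
  case True
  then show ?thesis
    using zero_mean_gaussian_process_lincomb[OF assms(1), of "{}"] by simp
next
  case False
  then show ?thesis
    using zero_mean_gaussian_process_lincomb[OF assms(1), of "{s, t}" "\<lambda>i. if i = s then 1 else -1"] assms(2,3)
    by simp
qed

lemma zero_mean_gaussian_process_increment_second_moment:
  assumes X: "zero_mean_gaussian_process M T X" and "s \<in> T" and "t \<in> T"
  shows "(\<integral>\<omega>. (X s \<omega> - X t \<omega>)^2 \<partial>M) = cov_fun M X s s - 2 * cov_fun M X s t + cov_fun M X t t"
proof -
  have [measurable]: "X u \<in> borel_measurable M" if "u \<in> T" for u
    using X that unfolding zero_mean_gaussian_process_def by auto
  have "prob_space M" using X unfolding zero_mean_gaussian_process_def by simp
  have square: "integrable M (\<lambda>\<omega>. (X u \<omega>)^2)" if "u \<in> T" for u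
  proof -
    obtain \<sigma> where "\<And>k. integrable M (\<lambda>\<omega>. X u \<omega> ^ (2*k))"
      using centered_gaussian_rv_even_moments[OF \<open>prob_space M\<close> zero_mean_gaussian_process_value[OF X \<open>u \<in> T\<close>]]
      by metis
    from this[of 1] show ?thesis by simp
  qed
  have product: "integrable M (\<lambda>\<omega>. X u \<omega> * X v \<omega>)" if "u \<in> T" "v \<in> T" for u v
  proof (rule Bochner_Integration.integrable_bound)
    show "integrable M (\<lambda>\<omega>. (X u \<omega>)^2 + (X v \<omega>)^2)" using square that by simp
    show "AE \<omega> in M. norm (X u \<omega> * X v \<omega>) \<le> norm ((X u \<omega>)^2 + (X v \<omega>)^2)"
    proof (intro AE_I2)
      fix \<omega>
      have "2 * \<bar>X u \<omega>\<bar> * \<bar>X v \<omega>\<bar> \<le> (X u \<omega>)^2 + (X v \<omega>)^2"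
        using sum_squares_bound[of "\<bar>X u \<omega>\<bar>" "\<bar>X v \<omega>\<bar>"] by simp
      moreover have "0 \<le> \<bar>X u \<omega>\<bar> * \<bar>X v \<omega>\<bar>" by simp
      ultimately have "\<bar>X u \<omega> * X v \<omega>\<bar> \<le> (X u \<omega>)^2 + (X v \<omega>)^2"
        unfolding abs_mult by linarith
      then show "norm (X u \<omega> * X v \<omega>) \<le> norm ((X u \<omega>)^2 + (X v \<omega>)^2)" by simp
    qed
  qed (use that in measurable)
  have "(\<lambda>\<omega>. (X s \<omega> - X t \<omega>)^2) = (\<lambda>\<omega>. X s \<omega> * X s \<omega> - 2 * (X s \<omega> * X t \<omega>) + X t \<omega> * X t \<omega>)"
    by (simp add: power2_eq_square algebra_simps)
  then show ?thesis
    unfolding cov_fun_def using product assms(2,3) by simp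
qed

lemma convergent_if_geometric_increments:
  fixes a :: "nat \<Rightarrow> real"
  assumes step: "\<And>n. n \<ge> N \<Longrightarrow> \<bar>a (Suc n) - a n\<bar> \<le> c * r^n" and "0 \<le> r" "r < 1"
  shows "convergent a" and "\<And>m. m \<ge> N \<Longrightarrow> \<bar>lim a - a m\<bar> \<le> c * r^m / (1 - r)"
proof -
  have tail: "a \<longlonglongrightarrow> a m + (\<Sum>i. a (Suc (i+m)) - a (i+m)) \<and> \<bar>\<Sum>i. a (Suc (i+m)) - a (i+m)\<bar> \<le> c * r^m / (1 - r)"
    if "m \<ge> N" for m
  proof -
    define b where "b i = a (Suc (i+m)) - a (i+m)" for i
    have geometric: "summable (\<lambda>i. c * r^m * r^i)"
      using \<open>0 \<le> r\<close> \<open>r < 1\<close> by (intro summable_mult summable_geometric) auto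
    have b_le: "norm (b i) \<le> c * r^m * r^i" for i
      using step[of "i+m"] that by (simp add: b_def power_add mult_ac)
    have "summable b"
      by (rule summable_comparison_test[OF _ geometric]) (use b_le in auto)
    have abs_summable: "summable (\<lambda>i. norm (b i))"
      by (rule summable_comparison_test[OF _ geometric]) (use b_le in auto)
    have "(\<lambda>n. \<Sum>i<n. b i) \<longlonglongrightarrow> suminf b"
      using \<open>summable b\<close> by (rule summable_LIMSEQ)
    moreover have "(\<Sum>i<n. b i) = a (n + m) - a m" for n
      unfolding b_def using sum_lessThan_telescope[of "\<lambda>i. a (i+m)" n] by simp
    ultimately have "(\<lambda>n. a (n+m) - a m) \<longlonglongrightarrow> suminf b" by simp
    then have "(\<lambda>n. a (n+m) - a m + a m) \<longlonglongrightarrow> suminf b + a m" by (intro tendsto_intros)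
    then have "(\<lambda>n. a (n+m)) \<longlonglongrightarrow> a m + suminf b" by (simp add: add.commute)
    then have "a \<longlonglongrightarrow> a m + suminf b" by (rule LIMSEQ_offset)
    moreover have "\<bar>suminf b\<bar> \<le> (\<Sum>i. norm (b i))"
      using summable_norm[OF abs_summable] by simp
    moreover have "\<dots> \<le> (\<Sum>i. c * r^m * r^i)"
      using b_le abs_summable geometric by (intro suminf_le) auto
    moreover have "\<dots> = c * r^m / (1 - r)"
      using \<open>0 \<le> r\<close> \<open>r < 1\<close> by (simp add: suminf_mult suminf_geometric)
    ultimately show ?thesis unfolding b_def by simp
  qed
  show "convergent a" using tail[of N] by (auto simp: convergent_def)
  show "\<bar>lim a - a m\<bar> \<le> c * r^m / (1 - r)" if "m \<ge> N" for m
    using tail[OF that] limI by fastforce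
qed

definition dyadic_floor :: "nat \<Rightarrow> real \<Rightarrow> real" where
  "dyadic_floor n t = of_int \<lfloor>2^n * t\<rfloor> / 2^n"

definition dyadic_increments_le :: "(real \<Rightarrow> real) \<Rightarrow> nat \<Rightarrow> real \<Rightarrow> bool" where
  "dyadic_increments_le f N r \<longleftrightarrow> (\<forall>n\<ge>N. \<forall>k::int. 0 \<le> k \<longrightarrow> k < 2^n \<longrightarrow>
      \<bar>f (of_int (k+1) / 2^n) - f (of_int k / 2^n)\<bar> \<le> r^n)"

lemma floor_two_power_mult_bounds:
  fixes t :: real
  assumes "0 \<le> t" "t \<le> 1"
  shows "0 \<le> \<lfloor>2^n * t\<rfloor>" "\<lfloor>2^n * t\<rfloor> \<le> 2^n"
proof -
  show "0 \<le> \<lfloor>2^n * t\<rfloor>" using assms by simp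
  have "\<lfloor>2^n * t\<rfloor> \<le> \<lfloor>(2::real)^n\<rfloor>" using assms by (intro floor_mono) simp
  then show "\<lfloor>2^n * t\<rfloor> \<le> 2^n" by (metis floor_of_int of_int_numeral of_int_power)
qed

lemma dyadic_floor_bounds:
  fixes t :: real
  assumes "0 \<le> t" "t \<le> 1"
  shows "dyadic_floor n t \<in> {0..1}" "dyadic_floor n t \<le> t" "t - dyadic_floor n t \<le> 1 / 2^n"
proof -
  have "of_int \<lfloor>2^n * t\<rfloor> \<le> (2::real)^n"
    using floor_two_power_mult_bounds(2)[OF assms] by (metis of_int_le_iff of_int_numeral of_int_power)
  then show "dyadic_floor n t \<in> {0..1}"
    unfolding dyadic_floor_def using floor_two_power_mult_bounds(1)[OF assms] by simp
  show "dyadic_floor n t \<le> t"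
    unfolding dyadic_floor_def using of_int_floor_le[of "2^n * t"] by (simp add: divide_le_eq mult.commute)
  have "t - dyadic_floor n t = (2^n * t - of_int \<lfloor>2^n * t\<rfloor>) / 2^n"
    unfolding dyadic_floor_def by (simp add: field_simps)
  also have "\<dots> \<le> 1 / 2^n"
    using real_of_int_floor_add_one_gt[of "2^n * t"] by (intro divide_right_mono) (linarith, simp)
  finally show "t - dyadic_floor n t \<le> 1 / 2^n" .
qed

lemma floor_double_bounds:
  fixes x :: real
  shows "2 * \<lfloor>x\<rfloor> \<le> \<lfloor>2 * x\<rfloor>" "\<lfloor>2 * x\<rfloor> \<le> 2 * \<lfloor>x\<rfloor> + 1"
proof -
  show "2 * \<lfloor>x\<rfloor> \<le> \<lfloor>2 * x\<rfloor>"
    using of_int_floor_le[of x] by (simp add: le_floor_iff)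
  have "2 * x < of_int (2 * \<lfloor>x\<rfloor> + 2)"
    using real_of_int_floor_add_one_gt[of x] by linarith
  then have "\<lfloor>2 * x\<rfloor> < 2 * \<lfloor>x\<rfloor> + 2" unfolding floor_less_iff by simp
  then show "\<lfloor>2 * x\<rfloor> \<le> 2 * \<lfloor>x\<rfloor> + 1" by simp
qed

lemma dyadic_increments_le_neighbours:
  assumes "dyadic_increments_le f N r" "0 \<le> r" "n \<ge> N"
    and "0 \<le> i" "i \<le> j" "j \<le> i + 1" "j \<le> 2^n"
  shows "\<bar>f (of_int j / 2^n) - f (of_int i / 2^n)\<bar> \<le> r^n"
proof (cases "j = i")
  case False
  then have "j = i + 1" using assms(5,6) by simp
  then show ?thesis using assms unfolding dyadic_increments_le_def by auto
qed (use assms(2) in simp)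

lemma dyadic_floor_Suc_increment_le:
  assumes f: "dyadic_increments_le f N r" and "0 \<le> r" "n \<ge> N" and t: "0 \<le> t" "t \<le> 1"
  shows "\<bar>f (dyadic_floor (Suc n) t) - f (dyadic_floor n t)\<bar> \<le> r * r^n"
proof -
  define i where "i = 2 * \<lfloor>2^n * t\<rfloor>"
  define j where "j = \<lfloor>2^Suc n * t\<rfloor>"
  have "i \<le> j" "j \<le> i + 1"
    unfolding i_def j_def using floor_double_bounds[of "2^n * t"] by (simp_all add: mult.assoc)
  moreover have "0 \<le> i" "j \<le> 2^Suc n"
    unfolding i_def j_def using floor_two_power_mult_bounds[OF t, of n] floor_two_power_mult_bounds[OF t, of "Suc n"]
    by simp_all
  moreover have "dyadic_floor n t = of_int i / 2^Suc n" "dyadic_floor (Suc n) t = of_int j / 2^Suc n"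
    unfolding dyadic_floor_def i_def j_def by simp_all
  ultimately show ?thesis
    using dyadic_increments_le_neighbours[OF f \<open>0 \<le> r\<close>, of "Suc n" i j] \<open>n \<ge> N\<close> by simp
qed

lemma dyadic_floor_close_increment_le:
  assumes f: "dyadic_increments_le f N r" and "0 \<le> r" "n \<ge> N"
    and "s \<in> {0..1}" "t \<in> {0..1}" and "\<bar>s - t\<bar> \<le> 1 / 2^n"
  shows "\<bar>f (dyadic_floor n s) - f (dyadic_floor n t)\<bar> \<le> r^n"
proof -
  have ordered: "\<bar>f (dyadic_floor n v) - f (dyadic_floor n u)\<bar> \<le> r^n"
    if "u \<in> {0..1}" "v \<in> {0..1}" "u \<le> v" "v - u \<le> 1 / 2^n" for u v
  proof -
    define i where "i = \<lfloor>2^n * u\<rfloor>"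
    define j where "j = \<lfloor>2^n * v\<rfloor>"
    have "0 \<le> i" "j \<le> 2^n"
      unfolding i_def j_def using floor_two_power_mult_bounds[of u n] floor_two_power_mult_bounds[of v n] that(1,2)
      by auto
    moreover have "i \<le> j" unfolding i_def j_def using \<open>u \<le> v\<close> by (intro floor_mono) simp
    moreover have "2^n * v \<le> 2^n * u + 1" using that(4) by (simp add: field_simps)
    then have "j \<le> \<lfloor>2^n * u + 1\<rfloor>" unfolding j_def by (rule floor_mono)
    then have "j \<le> i + 1" unfolding i_def by simp
    ultimately show ?thesis
      unfolding dyadic_floor_def i_def[symmetric] j_def[symmetric]
      by (intro dyadic_increments_le_neighbours[OF f \<open>0 \<le> r\<close> \<open>n \<ge> N\<close>])
  qed
  show ?thesis
  proof (cases "s \<le> t")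
    case True
    then show ?thesis using ordered[of s t] assms(4-6) by (simp add: abs_minus_commute)
  next
    case False
    then show ?thesis using ordered[of t s] assms(4-6) by simp
  qed
qed

lemma dyadic_approximation_converges:
  assumes f: "dyadic_increments_le f N r" and "0 \<le> r" "r < 1" and t: "0 \<le> t" "t \<le> 1"
  shows "convergent (\<lambda>n. f (dyadic_floor n t))"
    and "\<And>m. m \<ge> N \<Longrightarrow> \<bar>lim (\<lambda>n. f (dyadic_floor n t)) - f (dyadic_floor m t)\<bar> \<le> r^m / (1 - r)"
proof -
  have step: "\<bar>f (dyadic_floor (Suc n) t) - f (dyadic_floor n t)\<bar> \<le> r * r^n" if "n \<ge> N" for n
    using dyadic_floor_Suc_increment_le[OF f \<open>0 \<le> r\<close> that t] .
  show "convergent (\<lambda>n. f (dyadic_floor n t))"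
    by (rule convergent_if_geometric_increments(1)[OF step \<open>0 \<le> r\<close> \<open>r < 1\<close>])
  show "\<bar>lim (\<lambda>n. f (dyadic_floor n t)) - f (dyadic_floor m t)\<bar> \<le> r^m / (1 - r)" if "m \<ge> N" for m
  proof -
    have "r * r^m \<le> r^m" using \<open>0 \<le> r\<close> \<open>r < 1\<close> by (simp add: mult_left_le_one_le)
    then have "r * r^m / (1 - r) \<le> r^m / (1 - r)" using \<open>r < 1\<close> by (simp add: divide_right_mono)
    moreover have "\<bar>lim (\<lambda>n. f (dyadic_floor n t)) - f (dyadic_floor m t)\<bar> \<le> r * r^m / (1 - r)"
      by (rule convergent_if_geometric_increments(2)[OF step \<open>0 \<le> r\<close> \<open>r < 1\<close> that])
    ultimately show ?thesis by linarith
  qed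
qed

lemma exists_dyadic_scale:
  fixes d :: real
  assumes "0 < d" "d \<le> 1 / 2^N"
  obtains m where "m \<ge> N" "1 / 2^Suc m < d" "d \<le> 1 / 2^m"
proof -
  have "\<exists>m. (1/2::real)^m < d" using real_arch_pow_inv[OF \<open>0 < d\<close>, of "1/2"] by simp
  moreover have "(1::real) / 2^N \<le> 1" by simp
  then have "\<not> (1/2::real)^0 < d" using assms(2) unfolding power_0 by linarith
  ultimately obtain m where m: "\<not> (1/2::real)^m < d" "(1/2::real)^Suc m < d"
    using exists_least_lemma[of "\<lambda>m. (1/2::real)^m < d"] by blast
  have "m \<ge> N"
  proof (rule ccontr)
    assume "\<not> m \<ge> N"
    then have "(1/2::real)^N \<le> (1/2)^Suc m" by (intro power_decreasing) auto
    then show False using m(2) assms(2) by (simp add: power_one_over)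
  qed
  then show thesis using that m by (simp add: power_one_over not_less)
qed

lemma abs_diff_le_powr_if_bounded:
  fixes a b B d \<beta> :: real
  assumes "\<bar>a\<bar> \<le> B" "\<bar>b\<bar> \<le> B" "1 / 2^N < d" "0 < \<beta>"
  shows "\<bar>a - b\<bar> \<le> 2 * B * (2^N) powr \<beta> * d powr \<beta>"
proof -
  have "1 \<le> 2^N * d" using assms(3) by (simp add: field_simps)
  then have "1 \<le> (2^N * d) powr \<beta>" using assms(4) by (simp add: ge_one_powr_ge_zero)
  moreover have "0 \<le> B" using assms(1) by simp
  ultimately have "\<bar>a - b\<bar> \<le> 2 * B * (2^N * d) powr \<beta>"
    using assms(1,2) by (smt (verit) mult_le_cancel_left1)
  also have "\<dots> = 2 * B * (2^N) powr \<beta> * d powr \<beta>" using assms(3) by (simp add: powr_mult)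
  finally show ?thesis .
qed

lemma holder_on_unit_interval_if_dyadic_modulus:
  fixes g :: "real \<Rightarrow> real"
  assumes "0 < \<beta>" "0 \<le> c"
    and bound: "\<And>u. u \<in> {0..1} \<Longrightarrow> \<bar>g u\<bar> \<le> B"
    and modulus: "\<And>s t m. s \<in> {0..1} \<Longrightarrow> t \<in> {0..1} \<Longrightarrow> m \<ge> N \<Longrightarrow> \<bar>s - t\<bar> \<le> 1 / 2^m \<Longrightarrow>
        \<bar>g s - g t\<bar> \<le> c * (1 / 2^m) powr \<beta>"
  shows "holder_on \<beta> {0..1} g"
proof -
  have "0 \<le> B" using bound[of 0] by simp
  define K where "K = c * 2 powr \<beta> + 2 * B * (2^N) powr \<beta>"
  have "\<bar>g p - g q\<bar> \<le> K * \<bar>p - q\<bar> powr \<beta>" if p: "p \<in> {0..1}" and q: "q \<in> {0..1}" for p q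
  proof -
    define d where "d = \<bar>p - q\<bar>"
    have K_ge: "a * d powr \<beta> \<le> K * d powr \<beta>" if "a = c * 2 powr \<beta> \<or> a = 2 * B * (2^N) powr \<beta>" for a
      using that \<open>0 \<le> c\<close> \<open>0 \<le> B\<close> unfolding K_def by (auto intro!: mult_right_mono)
    consider "d = 0" | "d > 1 / 2^N" | "0 < d" "d \<le> 1 / 2^N" unfolding d_def by linarith
    then show ?thesis
    proof cases
      case 1
      then show ?thesis unfolding d_def by simp
    next
      case 2
      have "\<bar>g p - g q\<bar> \<le> 2 * B * (2^N) powr \<beta> * d powr \<beta>"
        unfolding d_def using abs_diff_le_powr_if_bounded[OF bound[OF p] bound[OF q] 2[unfolded d_def] \<open>0 < \<beta>\<close>] .
      also have "\<dots> \<le> K * d powr \<beta>" by (rule K_ge) simp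
      finally show ?thesis unfolding d_def .
    next
      case 3
      then obtain m where "m \<ge> N" and m: "1 / 2^Suc m < d" "d \<le> 1 / 2^m"
        by (rule exists_dyadic_scale)
      have "\<bar>g p - g q\<bar> \<le> c * (1 / 2^m) powr \<beta>" using modulus[OF p q \<open>m \<ge> N\<close>] m(2) unfolding d_def .
      also have "(1 / 2^m) powr \<beta> = 2 powr \<beta> * (1 / 2^Suc m) powr \<beta>"
        by (simp add: powr_mult[symmetric])
      also have "c * \<dots> \<le> c * 2 powr \<beta> * d powr \<beta>"
        using m(1) \<open>0 < \<beta>\<close> \<open>0 \<le> c\<close> by (simp add: mult.assoc mult_left_mono powr_mono2)
      also have "\<dots> \<le> K * d powr \<beta>" by (rule K_ge) simp
      finally show ?thesis unfolding d_def .
    qed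
  qed
  then show ?thesis unfolding holder_on_def dist_real_def by blast
qed

lemma holder_on_dyadic_limit:
  assumes f: "dyadic_increments_le f N (2 powr -\<beta>)" and "0 < \<beta>"
  shows "\<forall>t\<in>{0..1}. convergent (\<lambda>n. f (dyadic_floor n t))"
    and "holder_on \<beta> {0..1} (\<lambda>t. lim (\<lambda>n. f (dyadic_floor n t)))"
proof -
  define r :: real where "r = 2 powr -\<beta>"
  have "0 < r" "r < 1" unfolding r_def using \<open>0 < \<beta>\<close> by (simp_all add: powr_less_one)
  have r_power: "r^m = (1 / 2^m) powr \<beta>" for m
    unfolding r_def by (simp add: powr_realpow[symmetric] powr_powr powr_minus_divide powr_divide mult.commute)
  define g where "g t = lim (\<lambda>n. f (dyadic_floor n t))" for t
  note approx = dyadic_approximation_converges[OF f[folded r_def] less_imp_le[OF \<open>0 < r\<close>] \<open>r < 1\<close>]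
  show "\<forall>t\<in>{0..1}. convergent (\<lambda>n. f (dyadic_floor n t))" using approx(1) by auto
  have approx_le: "\<bar>g t - f (dyadic_floor m t)\<bar> \<le> r^m / (1 - r)" if "t \<in> {0..1}" "m \<ge> N" for t m
    using approx(2) that unfolding g_def by auto
  show "holder_on \<beta> {0..1} g"
  proof (rule holder_on_unit_interval_if_dyadic_modulus[OF \<open>0 < \<beta>\<close>, of "2 / (1 - r) + 1" _ "1 / (1 - r) + (\<Sum>k\<in>{0..2^N}. \<bar>f (of_int k / 2^N)\<bar>)" N])
    show "0 \<le> 2 / (1 - r) + 1" using \<open>r < 1\<close> by simp
    fix s t :: real and m :: nat assume s: "s \<in> {0..1}" and t: "t \<in> {0..1}" and "m \<ge> N" and "\<bar>s - t\<bar> \<le> 1 / 2^m"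
    have "\<bar>f (dyadic_floor m s) - f (dyadic_floor m t)\<bar> \<le> r^m"
      using dyadic_floor_close_increment_le[OF f[folded r_def] less_imp_le[OF \<open>0 < r\<close>]] s t \<open>m \<ge> N\<close> \<open>\<bar>s - t\<bar> \<le> 1 / 2^m\<close> by simp
    then have "\<bar>g s - g t\<bar> \<le> (2 / (1 - r) + 1) * r^m"
      using approx_le[OF s \<open>m \<ge> N\<close>] approx_le[OF t \<open>m \<ge> N\<close>] by (simp add: field_simps)
    then show "\<bar>g s - g t\<bar> \<le> (2 / (1 - r) + 1) * (1 / 2^m) powr \<beta>" unfolding r_power .
  next
    fix u :: real assume u: "u \<in> {0..1}"
    have "\<bar>g u - f (dyadic_floor N u)\<bar> \<le> 1 / (1 - r)"
      using approx_le[OF u order.refl] \<open>0 < r\<close> \<open>r < 1\<close> by (smt (verit) divide_right_mono power_le_one)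
    moreover have "\<lfloor>2^N * u\<rfloor> \<in> {0..2^N}" using floor_two_power_mult_bounds[of u N] u by simp
    then have "\<bar>f (dyadic_floor N u)\<bar> \<le> (\<Sum>k\<in>{0..2^N}. \<bar>f (of_int k / 2^N)\<bar>)"
      unfolding dyadic_floor_def by (intro member_le_sum[of _ _ "\<lambda>k. \<bar>f (of_int k / 2^N)\<bar>", simplified]) auto
    ultimately show "\<bar>g u\<bar> \<le> 1 / (1 - r) + (\<Sum>k\<in>{0..2^N}. \<bar>f (of_int k / 2^N)\<bar>)" by linarith
  qed
qed

locale kolmogorov_tail_condition = prob_space M for M :: "'a measure" +
  fixes X :: "real \<Rightarrow> 'a \<Rightarrow> real" and \<beta> C p q :: real
  assumes measurable_X[measurable]: "\<And>t. X t \<in> borel_measurable M"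
    and pos: "0 < \<beta>" "0 \<le> C" "0 < p"
    and exponents: "q - \<beta> * p > 1"
    and tail: "\<And>s t \<delta>. s \<in> {0..1} \<Longrightarrow> t \<in> {0..1} \<Longrightarrow> \<delta> > 0 \<Longrightarrow>
      measure M {\<omega>\<in>space M. \<delta> < \<bar>X s \<omega> - X t \<omega>\<bar>} \<le> C * \<bar>s - t\<bar> powr q / \<delta> powr p"
begin

lemma tail_at_dyadic_scale:
  assumes "s \<in> {0..1}" "t \<in> {0..1}" "\<bar>s - t\<bar> \<le> 1 / 2^n"
  shows "measure M {\<omega>\<in>space M. (2 powr -\<beta>)^n < \<bar>X s \<omega> - X t \<omega>\<bar>} \<le> C * (2 powr (\<beta> * p - q))^n"
proof -
  have "0 < q" using exponents pos by (smt (verit) mult_pos_pos)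
  have "measure M {\<omega>\<in>space M. (2 powr -\<beta>)^n < \<bar>X s \<omega> - X t \<omega>\<bar>} \<le> C * \<bar>s - t\<bar> powr q / ((2 powr -\<beta>)^n) powr p"
    using assms by (intro tail) auto
  also have "\<dots> \<le> C * (1 / 2^n) powr q / ((2 powr -\<beta>)^n) powr p"
    using assms(3) \<open>0 < q\<close> pos by (intro divide_right_mono mult_left_mono powr_mono2) auto
  also have "\<dots> = C * (2 powr (\<beta> * p - q))^n"
  proof -
    have "(1 / 2^n) powr q = 2 powr (- q * n)"
      by (simp add: powr_realpow[symmetric] powr_powr powr_minus_divide[symmetric] mult.commute)
    moreover have "((2 powr -\<beta>)^n) powr p = 2 powr (-\<beta> * n * p)"
      by (simp add: powr_realpow[symmetric] powr_powr)
    moreover have "(2 powr (\<beta> * p - q))^n = 2 powr (- q * n) / 2 powr (-\<beta> * n * p)"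
      by (simp add: powr_realpow[symmetric] powr_powr powr_diff[symmetric] algebra_simps)
    ultimately show ?thesis by simp
  qed
  finally show ?thesis .
qed

lemma summable_tail_bound: "summable (\<lambda>n. C * (2 * 2 powr (\<beta> * p - q))^n)"
proof -
  have "2 * 2 powr (\<beta> * p - q) = (2::real) powr (1 + (\<beta> * p - q))"
    using powr_add[of 2 1 "\<beta> * p - q"] by simp
  also have "\<dots> < 1" using exponents by (simp add: powr_less_one)
  finally show ?thesis by (intro summable_mult summable_geometric) simp
qed

lemma AE_dyadic_increments_le: "AE \<omega> in M. \<exists>N. dyadic_increments_le (\<lambda>s. X s \<omega>) N (2 powr -\<beta>)"
proof -
  define A where "A n = (\<Union>k\<in>{0..<2^n::int}.
    {\<omega>\<in>space M. (2 powr -\<beta>)^n < \<bar>X (of_int (k+1) / 2^n) \<omega> - X (of_int k / 2^n) \<omega>\<bar>})" for n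
  have [measurable]: "A n \<in> sets M" for n unfolding A_def by measurable
  have A_le: "measure M (A n) \<le> C * (2 * 2 powr (\<beta> * p - q))^n" for n
  proof -
    have "measure M (A n) \<le> (\<Sum>k\<in>{0..<2^n::int}.
        measure M {\<omega>\<in>space M. (2 powr -\<beta>)^n < \<bar>X (of_int (k+1) / 2^n) \<omega> - X (of_int k / 2^n) \<omega>\<bar>})"
      unfolding A_def by (rule measure_UNION_le) auto
    also have "\<dots> \<le> (\<Sum>k\<in>{0..<2^n::int}. C * (2 powr (\<beta> * p - q))^n)"
    proof (rule sum_mono, rule tail_at_dyadic_scale)
      fix k :: int assume k: "k \<in> {0..<2^n}"
      then have "real_of_int (k+1) \<le> 2^n" by (metis atLeastLessThan_iff of_int_le_iff of_int_numeral of_int_power zless_imp_add1_zle)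
      then show "of_int (k+1) / 2^n \<in> {0..(1::real)}" "of_int k / 2^n \<in> {0..(1::real)}"
        using k by auto
      show "\<bar>of_int (k+1) / 2^n - of_int k / 2^n\<bar> \<le> (1 / 2^n::real)"
        by (simp add: diff_divide_distrib[symmetric])
    qed
    also have "\<dots> = C * (2 * 2 powr (\<beta> * p - q))^n" by (simp add: power_mult_distrib)
    finally show ?thesis .
  qed
  have "summable (\<lambda>n. measure M (A n))"
    by (rule summable_comparison_test[OF _ summable_tail_bound]) (use A_le in auto)
  then have "AE \<omega> in M. eventually (\<lambda>n. \<omega> \<in> space M - A n) sequentially"
    by (intro borel_cantelli_AE1) (auto simp: emeasure_eq_measure)
  then show ?thesis
  proof eventually_elim
    case (elim \<omega>)
    then obtain N where "\<And>n. n \<ge> N \<Longrightarrow> \<omega> \<in> space M - A n" by (auto simp: eventually_sequentially)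
    then have "dyadic_increments_le (\<lambda>s. X s \<omega>) N (2 powr -\<beta>)"
      unfolding dyadic_increments_le_def A_def by (auto simp: not_less)
    then show ?case by blast
  qed
qed

lemma AE_dyadic_floor_tendsto:
  assumes "t \<in> {0..1}"
  shows "AE \<omega> in M. (\<lambda>n. X (dyadic_floor n t) \<omega>) \<longlonglongrightarrow> X t \<omega>"
proof -
  define B where "B n = {\<omega>\<in>space M. (2 powr -\<beta>)^n < \<bar>X (dyadic_floor n t) \<omega> - X t \<omega>\<bar>}" for n
  have [measurable]: "B n \<in> sets M" for n unfolding B_def by measurable
  have B_le: "measure M (B n) \<le> C * (2 * 2 powr (\<beta> * p - q))^n" for n
  proof -
    have "measure M (B n) \<le> C * (2 powr (\<beta> * p - q))^n"
      unfolding B_def using dyadic_floor_bounds[of t n] assms by (intro tail_at_dyadic_scale) auto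
    also have "\<dots> \<le> C * (2 * 2 powr (\<beta> * p - q))^n"
      using pos by (intro mult_left_mono power_mono) auto
    finally show ?thesis .
  qed
  have "summable (\<lambda>n. measure M (B n))"
    by (rule summable_comparison_test[OF _ summable_tail_bound]) (use B_le in auto)
  then have "AE \<omega> in M. eventually (\<lambda>n. \<omega> \<in> space M - B n) sequentially"
    by (intro borel_cantelli_AE1) (auto simp: emeasure_eq_measure)
  then show ?thesis
  proof eventually_elim
    case (elim \<omega>)
    then have "eventually (\<lambda>n. norm (X (dyadic_floor n t) \<omega> - X t \<omega>) \<le> (2 powr -\<beta>)^n) sequentially"
      by eventually_elim (auto simp: B_def)
    moreover have "(\<lambda>n. (2 powr -\<beta>)^n) \<longlonglongrightarrow> 0"
      using pos by (intro LIMSEQ_power_zero) (simp add: powr_less_one)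
    ultimately have "(\<lambda>n. X (dyadic_floor n t) \<omega> - X t \<omega>) \<longlonglongrightarrow> 0"
      by (rule Lim_null_comparison)
    then show ?case by (simp add: LIM_zero_cancel)
  qed
qed

lemma holder_modification:
  "\<exists>X'. modification M X X' \<and> (AE \<omega> in M. holder_on \<beta> {0..1} (\<lambda>t. X' t \<omega>))"
proof -
  define G where "G = {\<omega>\<in>space M. \<exists>N. dyadic_increments_le (\<lambda>s. X s \<omega>) N (2 powr -\<beta>)}"
  have [measurable]: "G \<in> sets M" unfolding G_def dyadic_increments_le_def by measurable
  have "AE \<omega> in M. \<omega> \<in> G"
    using AE_dyadic_increments_le AE_space by eventually_elim (auto simp: G_def)
  \<comment> \<open>The factor \<open>indicator G\<close> makes the limit exist everywhere, so \<open>X' t\<close> is measurable as a pointwise limit.\<close>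
  define X' where "X' t \<omega> = lim (\<lambda>n. indicator G \<omega> * X (dyadic_floor n t) \<omega>)" for t \<omega>
  have on_G: "(\<forall>t\<in>{0..1}. (\<lambda>n. X (dyadic_floor n t) \<omega>) \<longlonglongrightarrow> X' t \<omega>) \<and> holder_on \<beta> {0..1} (\<lambda>t. X' t \<omega>)"
    if "\<omega> \<in> G" for \<omega>
  proof -
    obtain N where "dyadic_increments_le (\<lambda>s. X s \<omega>) N (2 powr -\<beta>)"
      using \<open>\<omega> \<in> G\<close> unfolding G_def by auto
    from holder_on_dyadic_limit[OF this pos(1)] show ?thesis
      using \<open>\<omega> \<in> G\<close> by (simp add: X'_def convergent_LIMSEQ_iff)
  qed
  have "modification M X X'"
    unfolding modification_def
  proof (intro ballI conjI)
    fix t :: real assume t: "t \<in> {0..1}"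
    show "X' t \<in> borel_measurable M"
    proof (rule borel_measurable_LIMSEQ_metric[of "\<lambda>n \<omega>. indicator G \<omega> * X (dyadic_floor n t) \<omega>"])
      show "(\<lambda>n. indicator G \<omega> * X (dyadic_floor n t) \<omega>) \<longlonglongrightarrow> X' t \<omega>" for \<omega>
        using on_G[of \<omega>] t by (cases "\<omega> \<in> G") (auto simp: X'_def)
    qed measurable
    show "AE \<omega> in M. X' t \<omega> = X t \<omega>"
      using AE_dyadic_floor_tendsto[OF t] \<open>AE \<omega> in M. \<omega> \<in> G\<close>
    proof eventually_elim
      case (elim \<omega>)
      then show ?case using on_G[of \<omega>] t by (auto intro: LIMSEQ_unique)
    qed
  qed
  moreover have "AE \<omega> in M. holder_on \<beta> {0..1} (\<lambda>t. X' t \<omega>)"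
    using \<open>AE \<omega> in M. \<omega> \<in> G\<close> by eventually_elim (use on_G in blast)
  ultimately show ?thesis by blast
qed

end

lemma kolmogorov_continuity:
  assumes "prob_space M" and measurable: "\<And>t. t \<in> {0..1} \<Longrightarrow> X t \<in> borel_measurable M"
    and "0 < \<beta>" "0 \<le> C" "0 < p" "q - \<beta> * p > 1"
    and tail: "\<And>s t \<delta>. s \<in> {0..1} \<Longrightarrow> t \<in> {0..1} \<Longrightarrow> \<delta> > 0 \<Longrightarrow>
      measure M {\<omega>\<in>space M. \<delta> < \<bar>X s \<omega> - X t \<omega>\<bar>} \<le> C * \<bar>s - t\<bar> powr q / \<delta> powr p"
  shows "\<exists>X'. modification M X X' \<and> (AE \<omega> in M. holder_on \<beta> {0..1} (\<lambda>t. X' t \<omega>))"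
proof -
  \<comment> \<open>Freezing X outside [0,1] makes it measurable at every index, as the locale requires.\<close>
  define Xc where "Xc s = X (max 0 (min 1 s))" for s
  have Xc_eq: "Xc s = X s" if "s \<in> {0..1}" for s
    using that unfolding Xc_def by simp
  interpret prob_space M by fact
  interpret kolmogorov_tail_condition M Xc \<beta> C p q
  proof unfold_locales
    show "Xc t \<in> borel_measurable M" for t unfolding Xc_def by (rule measurable) simp
  qed (use assms in \<open>simp_all add: Xc_eq\<close>)
  obtain X' where "modification M Xc X'" "AE \<omega> in M. holder_on \<beta> {0..1} (\<lambda>t. X' t \<omega>)"
    using holder_modification by blast
  moreover have "modification M X X'"
    using \<open>modification M Xc X'\<close> unfolding modification_def by (simp add: Xc_eq)
  ultimately show ?thesis by blast
qed

lemma zero_mean_gaussian_process_holder_modification: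
  assumes X: "zero_mean_gaussian_process M {0..1} X" and "0 \<le> K" and "0 < \<beta>" "\<beta> < \<alpha> / 2"
    and variance: "\<And>s t. s \<in> {0..1} \<Longrightarrow> t \<in> {0..1} \<Longrightarrow>
        cov_fun M X s s - 2 * cov_fun M X s t + cov_fun M X t t \<le> K * \<bar>s - t\<bar> powr \<alpha>"
  shows "\<exists>X'. modification M X X' \<and> (AE \<omega> in M. holder_on \<beta> {0..1} (\<lambda>t. X' t \<omega>))"
proof -
  have "prob_space M" and measurable: "\<And>t. t \<in> {0..1} \<Longrightarrow> X t \<in> borel_measurable M"
    using X unfolding zero_mean_gaussian_process_def by auto
  \<comment> \<open>The moment of order 2m of a Gaussian increment is of order \<open>|s-t|^(\<alpha> m)\<close>; choose m with \<open>m (\<alpha> - 2\<beta>) > 1\<close>.\<close>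
  define m :: nat where "m = nat \<lceil>1 / (\<alpha> - 2 * \<beta>)\<rceil> + 1"
  have "m \<ge> 1" unfolding m_def by simp
  have "real m > 1 / (\<alpha> - 2 * \<beta>)" unfolding m_def by linarith
  then have exponents: "\<alpha> * real m - \<beta> * (2 * real m) > 1"
    using \<open>\<beta> < \<alpha> / 2\<close> by (simp add: field_simps)
  define c where "c = fact (2*m) / (2^m * fact m :: real)"
  show ?thesis
  proof (rule kolmogorov_continuity[OF \<open>prob_space M\<close> measurable \<open>0 < \<beta>\<close> _ _ exponents])
    show "0 \<le> c * K^m" unfolding c_def using \<open>0 \<le> K\<close> by simp
    show "0 < 2 * real m" using \<open>m \<ge> 1\<close> by simp
    fix s t \<delta> :: real assume s: "s \<in> {0..1}" and t: "t \<in> {0..1}" and "0 < \<delta>"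
    have "measure M {\<omega>\<in>space M. \<delta> < \<bar>X s \<omega> - X t \<omega>\<bar>} \<le> c * (K * \<bar>s - t\<bar> powr \<alpha>)^m / \<delta>^(2*m)"
      unfolding c_def
      using zero_mean_gaussian_process_increment_second_moment[OF X s t] variance[OF s t]
      by (intro centered_gaussian_rv_tail_le[OF \<open>prob_space M\<close> zero_mean_gaussian_process_increment[OF X s t]
            _ \<open>0 < \<delta>\<close>]) simp
    also have "\<dots> = c * K^m * \<bar>s - t\<bar> powr (\<alpha> * real m) / \<delta> powr (2 * real m)"
      using \<open>0 < \<delta>\<close> \<open>m \<ge> 1\<close>
      by (simp add: power_mult_distrib powr_realpow' [symmetric] powr_powr powr_realpow [symmetric])
    finally show "measure M {\<omega>\<in>space M. \<delta> < \<bar>X s \<omega> - X t \<omega>\<bar>} \<le> c * K^m * \<bar>s - t\<bar> powr (\<alpha> * real m) / \<delta> powr (2 * real m)" .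
  qed
qed

lemma holder_onE:
  assumes "holder_on a D f"
  obtains K where "0 \<le> K" "\<And>p q. p \<in> D \<Longrightarrow> q \<in> D \<Longrightarrow> dist (f p) (f q) \<le> K * dist p q powr a"
proof -
  obtain K where K: "\<And>p q. p \<in> D \<Longrightarrow> q \<in> D \<Longrightarrow> dist (f p) (f q) \<le> K * dist p q powr a"
    using assms unfolding holder_on_def by blast
  have "dist (f p) (f q) \<le> max K 0 * dist p q powr a" if "p \<in> D" "q \<in> D" for p q
    using K[OF that] by (smt (verit) mult_right_mono powr_ge_zero)
  then show thesis by (intro that[of "max K 0"]) auto
qed

lemma holder_on_diagonal_increment_le:
  fixes R :: "real \<Rightarrow> real \<Rightarrow> real"
  assumes "holder_on \<alpha> ({0..1} \<times> {0..1}) (\<lambda>(s, t). R s t)"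
  obtains K where "0 \<le> K"
    "\<And>s t. s \<in> {0..1} \<Longrightarrow> t \<in> {0..1} \<Longrightarrow> R s s - 2 * R s t + R t t \<le> K * \<bar>s - t\<bar> powr \<alpha>"
proof -
  obtain K where "0 \<le> K" and K: "\<And>p q. p \<in> {0..1} \<times> {0..1} \<Longrightarrow> q \<in> {0..1} \<times> {0..1} \<Longrightarrow>
      dist ((\<lambda>(s, t). R s t) p) ((\<lambda>(s, t). R s t) q) \<le> K * dist p q powr \<alpha>"
    using holder_onE[OF assms] by metis
  have "R s s - 2 * R s t + R t t \<le> 2 * K * \<bar>s - t\<bar> powr \<alpha>" if "s \<in> {0..1}" "t \<in> {0..1}" for s t
  proof -
    have "\<bar>R s s - R s t\<bar> \<le> K * \<bar>s - t\<bar> powr \<alpha>"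
      using K[of "(s, s)" "(s, t)"] that by (simp add: dist_Pair_Pair dist_real_def)
    moreover have "\<bar>R t t - R s t\<bar> \<le> K * \<bar>s - t\<bar> powr \<alpha>"
      using K[of "(t, t)" "(s, t)"] that by (simp add: dist_Pair_Pair dist_real_def abs_minus_commute)
    ultimately show ?thesis by linarith
  qed
  then show thesis using \<open>0 \<le> K\<close> by (intro that[of "2 * K"]) auto
qed

lemma in_H_cov:
  assumes "in_H M x Ct" "s \<in> {0..1}" "t \<in> {0..1}"
  shows "cov_fun M x s t = Ct (s - t)"
  using assms unfolding in_H_def by auto

lemma in_H_cov_even:
  assumes "in_H M x Ct" "u \<in> {0..1}"
  shows "Ct (- u) = Ct u"
  using in_H_cov[OF assms(1) _ assms(2), of 0] in_H_cov[OF assms(1) assms(2), of 0]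
  by (simp add: cov_fun_def mult.commute)

lemma powr_double_le:
  fixes d a :: real
  assumes "0 \<le> d" "a \<le> 1"
  shows "(2 * d) powr a \<le> 2 * d powr a"
proof -
  have "(2 * d) powr a = 2 powr a * d powr a" using assms by (simp add: powr_mult)
  also have "\<dots> \<le> 2 powr 1 * d powr a" using assms by (intro mult_right_mono powr_mono) auto
  finally show ?thesis by simp
qed

lemma holder_even_extension:
  fixes f :: "real \<Rightarrow> real"
  assumes even: "\<And>u. u \<in> {0..1} \<Longrightarrow> f (- u) = f u" and "0 \<le> K" "0 \<le> \<alpha>"
    and holder: "\<And>a b. a \<in> {0..1} \<Longrightarrow> b \<in> {0..1} \<Longrightarrow> \<bar>f a - f b\<bar> \<le> K * \<bar>a - b\<bar> powr \<alpha>"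
    and "a \<in> {-1..1}" "b \<in> {-1..1}"
  shows "\<bar>f a - f b\<bar> \<le> K * \<bar>a - b\<bar> powr \<alpha>"
proof -
  have f_abs: "f u = f \<bar>u\<bar>" if "u \<in> {-1..1}" for u
    using even[of "- u"] that by (cases "u \<ge> 0") auto
  have "\<bar>f a - f b\<bar> = \<bar>f \<bar>a\<bar> - f \<bar>b\<bar>\<bar>" using f_abs assms(5,6) by metis
  also have "\<dots> \<le> K * \<bar>\<bar>a\<bar> - \<bar>b\<bar>\<bar> powr \<alpha>" using holder assms(5,6) by auto
  also have "\<dots> \<le> K * \<bar>a - b\<bar> powr \<alpha>" using assms(2,3) by (intro mult_left_mono powr_mono2) auto
  finally show ?thesis .
qed

lemma abs_mult_diff_le:
  fixes a b a' b' :: real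
  shows "\<bar>a * b - a' * b'\<bar> \<le> \<bar>a\<bar> * \<bar>b - b'\<bar> + \<bar>b'\<bar> * \<bar>a - a'\<bar>"
proof -
  have "a * b - a' * b' = a * (b - b') + b' * (a - a')" by (simp add: algebra_simps)
  then show ?thesis by (metis abs_mult abs_triangle_ineq)
qed

lemma holder_increment_le_double:
  fixes f :: "real \<Rightarrow> real"
  assumes "0 \<le> K" "0 < \<alpha>" "\<alpha> \<le> 1" "0 \<le> d"
    and holder: "\<And>a b. a \<in> S \<Longrightarrow> b \<in> S \<Longrightarrow> \<bar>f a - f b\<bar> \<le> K * \<bar>a - b\<bar> powr \<alpha>"
    and "a \<in> S" "b \<in> S" "\<bar>a - b\<bar> \<le> 2 * d"
  shows "\<bar>f a - f b\<bar> \<le> 2 * K * d powr \<alpha>"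
proof -
  have "\<bar>f a - f b\<bar> \<le> K * (2 * d) powr \<alpha>"
    using holder[OF assms(6,7)] assms(1,2,8) by (smt (verit) mult_left_mono powr_mono2 abs_ge_zero)
  also have "\<dots> \<le> K * (2 * d powr \<alpha>)"
    using powr_double_le[OF assms(4,3)] assms(1) by (simp add: mult_left_mono)
  finally show ?thesis by simp
qed

lemma abs_le_abs_zero_add_if_holder:
  fixes f :: "real \<Rightarrow> real"
  assumes "0 \<le> K" "0 < \<alpha>"
    and holder: "\<And>a b. a \<in> {-1..1} \<Longrightarrow> b \<in> {-1..1} \<Longrightarrow> \<bar>f a - f b\<bar> \<le> K * \<bar>a - b\<bar> powr \<alpha>"
    and "a \<in> {-1..1}"
  shows "\<bar>f a\<bar> \<le> \<bar>f 0\<bar> + K"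
proof -
  have "\<bar>f a - f 0\<bar> \<le> K * \<bar>a\<bar> powr \<alpha>" using holder[of a 0] assms(4) by simp
  also have "\<dots> \<le> K" using assms(1,2,4) by (intro mult_left_le) (auto intro: powr_le1)
  finally show ?thesis by linarith
qed

lemma gen_cov_holder:
  assumes "0 \<le> K" "0 < \<alpha>" "\<alpha> \<le> 1"
    and holder: "\<And>a b. a \<in> {-1..1} \<Longrightarrow> b \<in> {-1..1} \<Longrightarrow> \<bar>Ct a - Ct b\<bar> \<le> K * \<bar>a - b\<bar> powr \<alpha>"
  shows "holder_on \<alpha> ({0..1} \<times> {0..1}) (\<lambda>(s, t). gen_cov Ct s t)"
proof -
  define B where "B = \<bar>Ct 0\<bar> + K"
  have bound: "\<bar>Ct a\<bar> \<le> B" if "a \<in> {-1..1}" for a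
    unfolding B_def using abs_le_abs_zero_add_if_holder[OF assms(1,2) holder that] .
  have "0 \<le> B" unfolding B_def using \<open>0 \<le> K\<close> by simp
  define L where "L = 2 * K + 4 * B * K / \<bar>Ct 0\<bar>"
  have "\<bar>gen_cov Ct s t - gen_cov Ct s' t'\<bar> \<le> L * dist (s, t) (s', t') powr \<alpha>"
    if "s \<in> {0..1}" "t \<in> {0..1}" "s' \<in> {0..1}" "t' \<in> {0..1}" for s t s' t'
  proof -
    define d where "d = dist (s, t) (s', t')"
    have "\<bar>s - s'\<bar> \<le> d" "\<bar>t - t'\<bar> \<le> d"
      unfolding d_def using dist_fst_le[of "(s, t)" "(s', t')"] dist_snd_le[of "(s, t)" "(s', t')"]
      by (simp_all add: dist_real_def)
    have "0 \<le> d" unfolding d_def by simp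
    note increment = holder_increment_le_double[where S="{-1..1}", OF assms(1-3) this holder]
    have "\<bar>(s - t) - (s' - t')\<bar> \<le> 2 * d"
      using \<open>\<bar>s - s'\<bar> \<le> d\<close> \<open>\<bar>t - t'\<bar> \<le> d\<close> by linarith
    then have "\<bar>Ct (s - t) - Ct (s' - t')\<bar> \<le> 2 * K * d powr \<alpha>"
      using that by (intro increment) auto
    moreover have "\<bar>Ct s * Ct (- t) - Ct s' * Ct (- t')\<bar> \<le> 4 * B * K * d powr \<alpha>"
    proof -
      have "\<bar>Ct s\<bar> * \<bar>Ct (- t) - Ct (- t')\<bar> \<le> B * (2 * K * d powr \<alpha>)"
        using that \<open>\<bar>t - t'\<bar> \<le> d\<close> \<open>0 \<le> B\<close> by (intro mult_mono bound increment) auto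
      moreover have "\<bar>Ct (- t')\<bar> * \<bar>Ct s - Ct s'\<bar> \<le> B * (2 * K * d powr \<alpha>)"
        using that \<open>\<bar>s - s'\<bar> \<le> d\<close> \<open>0 \<le> B\<close> by (intro mult_mono bound increment) auto
      ultimately show ?thesis using abs_mult_diff_le[of "Ct s" "Ct (- t)" "Ct s'" "Ct (- t')"] by simp
    qed
    then have "\<bar>(Ct s * Ct (- t) - Ct s' * Ct (- t')) / Ct 0\<bar> \<le> 4 * B * K * d powr \<alpha> / \<bar>Ct 0\<bar>"
      by (simp add: divide_right_mono)
    moreover have "gen_cov Ct s t - gen_cov Ct s' t' =
        (Ct (s - t) - Ct (s' - t')) - (Ct s * Ct (- t) - Ct s' * Ct (- t')) / Ct 0"
      unfolding gen_cov_def by (simp add: diff_divide_distrib)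
    ultimately have "\<bar>gen_cov Ct s t - gen_cov Ct s' t'\<bar> \<le> 2 * K * d powr \<alpha> + 4 * B * K * d powr \<alpha> / \<bar>Ct 0\<bar>"
      by linarith
    then show ?thesis unfolding L_def d_def by (simp add: algebra_simps)
  qed
  then show ?thesis unfolding holder_on_def by (intro exI[of _ L]) (auto simp: dist_real_def)
qed

lemma in_H_gen_cov_holder:
  assumes H: "in_H M x Ct" and "0 < \<alpha>" "\<alpha> \<le> 1" and "holder_on \<alpha> {0..1} Ct"
  shows "holder_on \<alpha> ({0..1} \<times> {0..1}) (\<lambda>(s, t). gen_cov Ct s t)"
proof -
  obtain K where "0 \<le> K" and K: "\<And>a b. a \<in> {0..1} \<Longrightarrow> b \<in> {0..1} \<Longrightarrow> dist (Ct a) (Ct b) \<le> K * dist a b powr \<alpha>"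
    using holder_onE[OF assms(4)] by metis
  have "\<bar>Ct a - Ct b\<bar> \<le> K * \<bar>a - b\<bar> powr \<alpha>" if "a \<in> {0..1}" "b \<in> {0..1}" for a b
    using K[OF that] by (simp add: dist_real_def)
  note holder_extended = holder_even_extension[OF in_H_cov_even[OF H] \<open>0 \<le> K\<close> _ this]
  show ?thesis
    using \<open>0 < \<alpha>\<close> by (intro gen_cov_holder[OF \<open>0 \<le> K\<close> \<open>0 < \<alpha>\<close> \<open>\<alpha> \<le> 1\<close>] holder_extended) auto
qed

lemma powr_bound_if_local_bound:
  fixes f :: "real \<Rightarrow> real"
  assumes "0 < \<delta>" "0 \<le> c" "0 \<le> B" "0 \<le> \<alpha>"
    and near: "\<And>u. u \<in> {0..1} \<Longrightarrow> u < \<delta> \<Longrightarrow> f u \<le> c * u powr \<alpha>"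
    and bounded: "\<And>u. u \<in> {0..1} \<Longrightarrow> f u \<le> B"
    and "u \<in> {0..1}"
  shows "f u \<le> max c (B / \<delta> powr \<alpha>) * u powr \<alpha>"
proof (cases "u < \<delta>")
  case True
  then have "f u \<le> c * u powr \<alpha>" using near \<open>u \<in> {0..1}\<close> by blast
  also have "\<dots> \<le> max c (B / \<delta> powr \<alpha>) * u powr \<alpha>" by (intro mult_right_mono) auto
  finally show ?thesis .
next
  case False
  have "f u \<le> B / \<delta> powr \<alpha> * \<delta> powr \<alpha>" using bounded \<open>u \<in> {0..1}\<close> \<open>0 < \<delta>\<close> by simp
  also have "\<dots> \<le> B / \<delta> powr \<alpha> * u powr \<alpha>"
    using False assms(1,3,4) by (intro mult_left_mono powr_mono2) auto
  also have "\<dots> \<le> max c (B / \<delta> powr \<alpha>) * u powr \<alpha>" by (intro mult_right_mono) auto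
  finally show ?thesis .
qed

lemma cov_decrement_le_gen_cov_diagonal:
  assumes "0 < Ct 0" "0 < Ct u" "Ct (- u) = Ct u"
  shows "Ct 0 - Ct u \<le> max 0 (gen_cov Ct u u - gen_cov Ct 0 0)"
proof (cases "Ct u \<le> Ct 0")
  case True
  have "Ct 0 - Ct u \<le> (Ct 0 - Ct u) * (Ct 0 + Ct u) / Ct 0"
    using True assms(1,2) by (simp add: field_simps mult_left_mono)
  also have "\<dots> = gen_cov Ct u u - gen_cov Ct 0 0"
    using assms(1,3) unfolding gen_cov_def by (simp add: field_simps power2_eq_square)
  finally show ?thesis by simp
qed simp

lemma cov_decrement_le_if_gen_cov_holder:
  assumes "0 < Ct 0" "0 < Ct u" "Ct (- u) = Ct u" "0 \<le> u" "0 \<le> K" "0 < \<alpha>" "\<alpha> \<le> 1"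
    and holder: "dist (gen_cov Ct u u) (gen_cov Ct 0 0) \<le> K * dist (u, u) (0, 0) powr \<alpha>"
  shows "Ct 0 - Ct u \<le> 2 * K * u powr \<alpha>"
proof -
  have "Ct 0 - Ct u \<le> max 0 (gen_cov Ct u u - gen_cov Ct 0 0)"
    using cov_decrement_le_gen_cov_diagonal[OF assms(1-3)] .
  also have "\<dots> \<le> K * dist (u, u) (0, 0) powr \<alpha>"
    using holder \<open>0 \<le> K\<close> by (simp add: dist_real_def)
  also have "\<dots> \<le> K * (2 * u) powr \<alpha>"
    using sqrt_sum_squares_le_sum_abs[of u u] assms(4-6)
    by (intro mult_left_mono powr_mono2) (auto simp: dist_Pair_Pair dist_real_def)
  also have "\<dots> \<le> K * (2 * u powr \<alpha>)"
    using powr_double_le[of u \<alpha>] assms(4,5,7) by (intro mult_left_mono) auto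
  finally show ?thesis by simp
qed

lemma in_H_cov_origin_increment_le:
  assumes H: "in_H M x Ct" and "0 < \<alpha>" "\<alpha> \<le> 1"
    and "holder_on \<alpha> ({0..1} \<times> {0..1}) (\<lambda>(s, t). gen_cov Ct s t)"
  obtains K where "0 \<le> K" "\<And>u. u \<in> {0..1} \<Longrightarrow> Ct 0 - Ct u \<le> K * u powr \<alpha>"
proof -
  obtain K where "0 \<le> K" and K: "\<And>p q. p \<in> {0..1} \<times> {0..1} \<Longrightarrow> q \<in> {0..1} \<times> {0..1} \<Longrightarrow>
      dist ((\<lambda>(s, t). gen_cov Ct s t) p) ((\<lambda>(s, t). gen_cov Ct s t) q) \<le> K * dist p q powr \<alpha>"
    using holder_onE[OF assms(4)] by metis
  have "0 \<le> (\<integral>\<omega>. x 0 \<omega> * x 0 \<omega> \<partial>M)" by (intro integral_nonneg_AE) simp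
  then have "0 \<le> Ct 0" using in_H_cov[OF H, of 0 0] unfolding cov_fun_def by simp
  then consider "Ct 0 = 0" | "0 < Ct 0" by linarith
  then show thesis
  proof cases
    case 1
    \<comment> \<open>Then the correction term of \<open>gen_cov\<close> is a division by zero, so \<open>gen_cov Ct u 0 = Ct u\<close>.\<close>
    have "Ct 0 - Ct u \<le> K * u powr \<alpha>" if "u \<in> {0..1}" for u
      using K[of "(u, 0)" "(0, 0)"] that 1 by (simp add: gen_cov_def dist_Pair_Pair dist_real_def)
    then show thesis using \<open>0 \<le> K\<close> that by blast
  next
    case 2
    have "continuous_on {-1..1} Ct" using H unfolding in_H_def by simp
    then obtain \<delta> where "0 < \<delta>" and \<delta>: "\<And>u. u \<in> {-1..1} \<Longrightarrow> dist u 0 < \<delta> \<Longrightarrow> dist (Ct u) (Ct 0) < Ct 0"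
      using 2 unfolding continuous_on_iff by (metis atLeastAtMost_iff neg_le_0_iff_le zero_less_one_class.zero_le_one)
    obtain B where "\<forall>u\<in>{-1..1}. \<bar>Ct u\<bar> \<le> B"
      using compact_imp_bounded[OF compact_continuous_image[OF \<open>continuous_on {-1..1} Ct\<close>]]
      unfolding bounded_iff by auto
    then have B: "\<And>u. u \<in> {-1..1} \<Longrightarrow> \<bar>Ct u\<bar> \<le> B" by blast
    have near: "Ct 0 - Ct u \<le> 2 * K * u powr \<alpha>" if u: "u \<in> {0..1}" "u < \<delta>" for u
    proof (rule cov_decrement_le_if_gen_cov_holder[OF 2 _ in_H_cov_even[OF H u(1)] _ \<open>0 \<le> K\<close> \<open>0 < \<alpha>\<close> \<open>\<alpha> \<le> 1\<close>])
      show "0 < Ct u" using \<delta>[of u] u by (auto simp: dist_real_def)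
      show "dist (gen_cov Ct u u) (gen_cov Ct 0 0) \<le> K * dist (u, u) (0, 0) powr \<alpha>"
        using K[of "(u, u)" "(0, 0)"] u by simp
    qed (use u in simp)
    have "Ct 0 - Ct u \<le> max (2 * K) (2 * B / \<delta> powr \<alpha>) * u powr \<alpha>" if "u \<in> {0..1}" for u
    proof (rule powr_bound_if_local_bound[OF \<open>0 < \<delta>\<close> _ _ _ near _ that])
      show "Ct 0 - Ct v \<le> 2 * B" if "v \<in> {0..1}" for v using B[of 0] B[of v] that by auto
    qed (use \<open>0 \<le> K\<close> B[of 0] \<open>0 < \<alpha>\<close> in auto)
    then show thesis using \<open>0 \<le> K\<close> by (intro that[of "max (2 * K) (2 * B / \<delta> powr \<alpha>)"]) auto
  qed
qed

lemma in_H_increment_variance_le: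
  assumes H: "in_H M x Ct" and "0 < \<alpha>" "\<alpha> \<le> 1"
    and "holder_on \<alpha> ({0..1} \<times> {0..1}) (\<lambda>(s, t). gen_cov Ct s t)"
  obtains K where "0 \<le> K" "\<And>s t. s \<in> {0..1} \<Longrightarrow> t \<in> {0..1} \<Longrightarrow>
      cov_fun M x s s - 2 * cov_fun M x s t + cov_fun M x t t \<le> K * \<bar>s - t\<bar> powr \<alpha>"
proof -
  obtain K where "0 \<le> K" and K: "\<And>u. u \<in> {0..1} \<Longrightarrow> Ct 0 - Ct u \<le> K * u powr \<alpha>"
    using in_H_cov_origin_increment_le[OF assms] by metis
  have "cov_fun M x s s - 2 * cov_fun M x s t + cov_fun M x t t \<le> 2 * K * \<bar>s - t\<bar> powr \<alpha>"
    if "s \<in> {0..1}" "t \<in> {0..1}" for s t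
  proof -
    have "\<bar>s - t\<bar> \<in> {0..1}" using that by auto
    moreover have "Ct (s - t) = Ct \<bar>s - t\<bar>"
      using in_H_cov_even[OF H \<open>\<bar>s - t\<bar> \<in> {0..1}\<close>] by (cases "s \<ge> t") auto
    ultimately show ?thesis using K[of "\<bar>s - t\<bar>"] in_H_cov[OF H] that by simp
  qed
  then show thesis using \<open>0 \<le> K\<close> by (intro that[of "2 * K"]) auto
qed

theorem theorem5p3:
  fixes M :: "'a measure" and x :: "real \<Rightarrow> 'a \<Rightarrow> real" and Ct :: "real \<Rightarrow> real"
    and N :: "'b measure" and y :: "real \<Rightarrow> 'b \<Rightarrow> real" and \<alpha> :: real
  assumes "in_H M x Ct"
    and "generated_by N y Ct"
    and "0 < \<alpha>" and "\<alpha> \<le> 1"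
  shows "(holder_on \<alpha> {0..1} Ct \<longrightarrow>
            holder_on \<alpha> ({0..1} \<times> {0..1}) (\<lambda>(s, t). gen_cov Ct s t))
       \<and> (holder_on \<alpha> ({0..1} \<times> {0..1}) (\<lambda>(s, t). gen_cov Ct s t) \<longrightarrow>
            (\<forall>\<beta>. 0 < \<beta> \<and> \<beta> < \<alpha> / 2 \<longrightarrow>
               (\<exists>y'. modification N y y' \<and> (AE \<omega> in N. holder_on \<beta> {0..1} (\<lambda>t. y' t \<omega>))) \<and>
               (\<exists>x'. modification M x x' \<and> (AE \<omega> in M. holder_on \<beta> {0..1} (\<lambda>t. x' t \<omega>)))))"
proof (intro conjI impI allI)
  show "holder_on \<alpha> ({0..1} \<times> {0..1}) (\<lambda>(s, t). gen_cov Ct s t)" if "holder_on \<alpha> {0..1} Ct"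
    using in_H_gen_cov_holder[OF assms(1,3,4) that] .
next
  fix \<beta> :: real
  assume R: "holder_on \<alpha> ({0..1} \<times> {0..1}) (\<lambda>(s, t). gen_cov Ct s t)" and \<beta>: "0 < \<beta> \<and> \<beta> < \<alpha> / 2"
  obtain K where "0 \<le> K" and K: "\<And>s t. s \<in> {0..1} \<Longrightarrow> t \<in> {0..1} \<Longrightarrow>
      gen_cov Ct s s - 2 * gen_cov Ct s t + gen_cov Ct t t \<le> K * \<bar>s - t\<bar> powr \<alpha>"
    using holder_on_diagonal_increment_le[OF R] by metis
  show "\<exists>y'. modification N y y' \<and> (AE \<omega> in N. holder_on \<beta> {0..1} (\<lambda>t. y' t \<omega>))"
    using assms(2) K \<beta> unfolding generated_by_def
    by (intro zero_mean_gaussian_process_holder_modification[OF _ \<open>0 \<le> K\<close>]) auto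
  obtain K' where "0 \<le> K'" and "\<And>s t. s \<in> {0..1} \<Longrightarrow> t \<in> {0..1} \<Longrightarrow>
      cov_fun M x s s - 2 * cov_fun M x s t + cov_fun M x t t \<le> K' * \<bar>s - t\<bar> powr \<alpha>"
    using in_H_increment_variance_le[OF assms(1,3,4) R] by metis
  then show "\<exists>x'. modification M x x' \<and> (AE \<omega> in M. holder_on \<beta> {0..1} (\<lambda>t. x' t \<omega>))"
    using assms(1) \<beta> unfolding in_H_def
    by (intro zero_mean_gaussian_process_holder_modification[OF _ \<open>0 \<le> K'\<close>]) auto
qed

end
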